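(* Let $q\in\mathbb{C}\setminus\{0,1,-1\}$, let $n\ge3$, and let $V$ be the complex vector space with basis $\{L_m: m\in\mathbb{Z}\}$. Define an $n$-linear bracket on $V$ by $$\llbracket L_{i_1},\dots,L_{i_n}\rrbracket=\frac{\mathrm{sign}(n)}{(q-q^{-1})^{n-1}}\det\Big(q^{2\left(r-\lfloor\frac{n-1}{2}\rfloor\right)i_j}\Big)_{0\le r\le n-1,\;1\le j\le n}\;L_{i_1+\cdots+i_n},$$ where $\mathrm{sign}(n)=1$ if $n\equiv0,1\pmod4$ and $-1$ if $n\equiv2,3\pmod4$. Then $(V,\llbracket\cdot,\dots,\cdot\rrbracket)$ is a sh-$n$-Lie algebra.
   Context: A sh-$n$-Lie algebra is a vector space $V$ with an $n$-linear bracket $[\cdot,\dots,\cdot]:V^{\otimes n}\to V$ that is skew-symmetric, $[x_{\sigma(1)},\dots,x_{\sigma(n)}]=\mathrm{sgn}(\sigma)[x_1,\dots,x_n]$, and satisfies the sh-Jacobi identity $$\sum_{\sigma\in Sh(n,n-1)}\mathrm{sgn}(\sigma)\big[[x_{\sigma(1)},\dots,x_{\sigma(n)}],x_{\sigma(n+1)},\dots,x_{\sigma(2n-1)}\big]=0$$ for all $x_1,\dots,x_{2n-1}\in V$, where $Sh(n,n-1)=\{\sigma\in S_{2n-1}:\sigma(1)<\dots<\sigma(n),\ \sigma(n+1)<\dots<\sigma(2n-1)\}$. This bracket is the $q$-deformed Virasoro–Witt $n$-algebra. *)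

theory Defs
  imports Complex_Main "HOL-Combinatorics.Permutations" "Jordan_Normal_Form.Determinant"
begin

text \<open>The vector space V with basis L_m (m in Z) is modelled as the finitely supported
  functions int => complex; L_m is the indicator of m.\<close>

definition Vspace :: "(int \<Rightarrow> complex) set" where
  "Vspace = {x. finite {m. x m \<noteq> 0}}"

definition basisL :: "int \<Rightarrow> (int \<Rightarrow> complex)" where
  "basisL k = (\<lambda>m. if m = k then 1 else 0)"

definition sh_n_Lie :: "(int \<Rightarrow> complex) set \<Rightarrow> nat \<Rightarrow> ((nat \<Rightarrow> (int \<Rightarrow> complex)) \<Rightarrow> (int \<Rightarrow> complex)) \<Rightarrow> bool" where
  "sh_n_Lie V n br \<longleftrightarrow>
     (\<forall>x. (\<forall>j<n. x j \<in> V) \<longrightarrow> br x \<in> V) \<and>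
     (\<forall>x j y z a b. (\<forall>k<n. x k \<in> V) \<and> j < n \<and> y \<in> V \<and> z \<in> V \<longrightarrow>
        br (x(j := (\<lambda>m. a * y m + b * z m))) =
        (\<lambda>m. a * br (x(j := y)) m + b * br (x(j := z)) m)) \<and>
     (\<forall>x p. (\<forall>k<n. x k \<in> V) \<and> p permutes {..<n} \<longrightarrow>
        br (x \<circ> p) = (\<lambda>m. of_int (sign p) * br x m)) \<and>
     (\<forall>x. (\<forall>k<2*n-1. x k \<in> V) \<longrightarrow>
        (\<lambda>m. \<Sum>\<sigma>\<in>{\<sigma>. \<sigma> permutes {..<2*n-1} \<and> strict_mono_on {..<n} \<sigma> \<and> strict_mono_on {n..<2*n-1} \<sigma>}.
           of_int (sign \<sigma>) * br (\<lambda>j. if j = 0 then br (\<lambda>k. x (\<sigma> k)) else x (\<sigma> (n - 1 + j))) m)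
        = (\<lambda>m. 0))"

definition signn :: "nat \<Rightarrow> complex" where
  "signn n = (if n mod 4 = 0 \<or> n mod 4 = 1 then 1 else -1)"

text \<open>Structure constant: the bracket of L_{i_0},...,L_{i_{n-1}} equals
  qcoeff q n i * L_{i_0 + ... + i_{n-1}}.\<close>
definition qcoeff :: "complex \<Rightarrow> nat \<Rightarrow> (nat \<Rightarrow> int) \<Rightarrow> complex" where
  "qcoeff q n i = signn n / (q - inverse q) ^ (n - 1) *
     det (mat n n (\<lambda>(r, j). q powi (2 * (int r - int ((n - 1) div 2)) * i j)))"

definition qbracket :: "complex \<Rightarrow> nat \<Rightarrow> (nat \<Rightarrow> (int \<Rightarrow> complex)) \<Rightarrow> (int \<Rightarrow> complex)" where
  "qbracket q n x = (\<lambda>m. \<Sum>i\<in>{i \<in> PiE {..<n} (\<lambda>j. {k. x j k \<noteq> 0}). (\<Sum>j<n. i j) = m}.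
       (\<Prod>j<n. x j (i j)) * qcoeff q n i)"

end

theory Submission
  imports Defs
begin

text \<open>
  Extending the bracket n-linearly, closure and linearity are immediate, skew-symmetry is the
  alternating property of the determinant, and the sh-Jacobi identity becomes an identity between
  structure constants for every (2n-1)-tuple w of indices.  Since each Jacobi term is invariant
  under permutations within the two blocks, the sum over shuffles may be replaced by the sum over
  all permutations.  Expanding both determinants and fixing the column permutation of the outer one,
  the product of the two diagonal terms is a single monomial in the entries of w; the alternating sum
  over all permutations is then a determinant with two equal rows, because the exponents
  r - \<lfloor>(n-1)/2\<rfloor> satisfy e_a + e_r = e_b for suitable a and b \<noteq> r
  as soon as n \<ge> 3.
\<close>

section \<open>Shuffles\<close>

definition shuffles :: "nat \<Rightarrow> nat \<Rightarrow> (nat \<Rightarrow> nat) set" where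
  "shuffles n N = {\<sigma>. \<sigma> permutes {..<N} \<and> strict_mono_on {..<n} \<sigma> \<and> strict_mono_on {n..<N} \<sigma>}"

lemma strict_mono_on_image_eqD:
  fixes f g :: "nat \<Rightarrow> nat"
  assumes "strict_mono_on A f" and "strict_mono_on A g" and "f ` A = g ` A" and "x \<in> A"
  shows "f x = g x"
  using assms(4)
proof (induction x rule: less_induct)
  case (less x)
  have le: "h' x \<le> h x"
    if h: "strict_mono_on A h" and h': "strict_mono_on A h'" and im: "h ` A = h' ` A"
      and IH: "\<And>y. y \<in> A \<Longrightarrow> y < x \<Longrightarrow> h y = h' y" for h h' :: "nat \<Rightarrow> nat"
  proof -
    obtain y where y: "y \<in> A" "h x = h' y"
      using im less.prems by (metis image_eqI imageE)
    have "\<not> y < x"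
    proof
      assume "y < x"
      then have "h y < h x" by (rule strict_mono_onD[OF h y(1) less.prems])
      with IH[OF y(1) \<open>y < x\<close>] y(2) show False by simp
    qed
    then show ?thesis
      using y strict_mono_on_less_eq[OF h' less.prems y(1)] by simp
  qed
  have "g x \<le> f x" by (rule le[OF assms(1-3)]) (simp add: less.IH)
  moreover have "f x \<le> g x" by (rule le[OF assms(2,1) assms(3)[symmetric]]) (simp add: less.IH)
  ultimately show ?case by simp
qed

lemma strict_mono_on_enumeration:
  fixes A :: "nat set"
  assumes "finite A"
  obtains f where "strict_mono_on {c..<c + card A} f" and "f ` {c..<c + card A} = A"
proof
  define L where "L = sorted_list_of_set A"
  have len: "length L = card A" and srt: "sorted_wrt (<) L" and setL: "set L = A"
    using assms by (simp_all add: L_def)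
  show "strict_mono_on {c..<c + card A} (\<lambda>x. L ! (x - c))"
    using sorted_wrt_nth_less[OF srt] len by (intro strict_mono_onI) auto
  have "(\<lambda>x. x - c) ` {c..<c + card A} = {..<length L}"
    using len by (auto simp: image_minus_const_atLeastLessThan_nat)
  moreover have "(\<lambda>x. L ! (x - c)) ` {c..<c + card A} = (\<lambda>i. L ! i) ` (\<lambda>x. x - c) ` {c..<c + card A}"
    by (simp only: image_image)
  ultimately have "(\<lambda>x. L ! (x - c)) ` {c..<c + card A} = (\<lambda>i. L ! i) ` {..<length L}"
    by simp
  moreover have "(\<lambda>i. L ! i) ` {..<length L} = A"
    using setL by (auto simp: set_conv_nth)
  ultimately show "(\<lambda>x. L ! (x - c)) ` {c..<c + card A} = A" by simp
qed

lemma shuffle_image_upper: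
  assumes "\<sigma> \<in> shuffles n N" and "n \<le> N"
  shows "\<sigma> ` {n..<N} = {..<N} - \<sigma> ` {..<n}"
proof -
  have \<sigma>: "\<sigma> permutes {..<N}" using assms(1) by (simp add: shuffles_def)
  have "\<sigma> ` ({..<N} - {..<n}) = \<sigma> ` {..<N} - \<sigma> ` {..<n}"
    by (rule inj_on_image_set_diff[where C = "{..<N}", OF permutes_inj_on[OF \<sigma>]]) (use assms(2) in auto)
  moreover have "{..<N} - {..<n} = {n..<N}" by auto
  ultimately show ?thesis by (simp add: permutes_image[OF \<sigma>])
qed

lemma shuffles_eqI:
  assumes "\<sigma> \<in> shuffles n N" and "\<sigma>' \<in> shuffles n N" and "n \<le> N"
    and "\<sigma> ` {..<n} = \<sigma>' ` {..<n}"
  shows "\<sigma> = \<sigma>'"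
proof
  fix x
  have "\<sigma> ` {n..<N} = \<sigma>' ` {n..<N}"
    using assms by (simp add: shuffle_image_upper)
  then consider "x < n" | "x \<in> {n..<N}" | "x \<notin> {..<N}" by fastforce
  then show "\<sigma> x = \<sigma>' x"
  proof cases
    case 1 then show ?thesis
      using assms by (intro strict_mono_on_image_eqD[of "{..<n}"]) (auto simp: shuffles_def)
  next
    case 2 then show ?thesis
      using assms \<open>\<sigma> ` {n..<N} = \<sigma>' ` {n..<N}\<close>
      by (intro strict_mono_on_image_eqD[of "{n..<N}"]) (auto simp: shuffles_def)
  next
    case 3 then show ?thesis
      using assms(1,2) by (auto simp: shuffles_def permutes_not_in)
  qed
qed

lemma shuffle_with_image:
  assumes "A \<subseteq> {..<N}" and "card A = n" and "n \<le> N"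
  obtains \<sigma> where "\<sigma> \<in> shuffles n N" and "\<sigma> ` {..<n} = A"
proof -
  have finA: "finite A" using assms(1) finite_subset by blast
  have "card ({..<N} - A) = N - n" using assms finA by (simp add: card_Diff_subset)
  then obtain f2 where f2: "strict_mono_on {n..<N} f2" "f2 ` {n..<N} = {..<N} - A"
    using strict_mono_on_enumeration[of "{..<N} - A" n] assms(3) by auto
  obtain f1 where f1: "strict_mono_on {..<n} f1" "f1 ` {..<n} = A"
    using strict_mono_on_enumeration[OF finA, of 0] assms(2) by (auto simp: atLeast0LessThan)
  define \<sigma> where "\<sigma> x = (if x < n then f1 x else if x < N then f2 x else x)" for x
  have im1: "\<sigma> ` {..<n} = A" using f1(2) by (auto simp: \<sigma>_def image_iff)
  have im2: "\<sigma> ` {n..<N} = {..<N} - A" using f2(2) by (auto simp: \<sigma>_def image_iff)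
  have "{..<N} = {..<n} \<union> {n..<N}" using assms(3) by auto
  then have im: "\<sigma> ` {..<N} = {..<N}" using im1 im2 assms(1) by (metis image_Un Un_Diff_cancel sup.absorb2)
  then have "inj_on \<sigma> {..<N}" by (intro eq_card_imp_inj_on) simp_all
  then have "\<sigma> permutes {..<N}"
    using im assms(3) by (intro bij_imp_permutes) (auto simp: bij_betw_def \<sigma>_def)
  moreover have "strict_mono_on {..<n} \<sigma>" "strict_mono_on {n..<N} \<sigma>"
    using f1(1) f2(1) by (auto simp: \<sigma>_def strict_mono_on_def monotone_on_def)
  ultimately show ?thesis using im1 that by (simp add: shuffles_def)
qed

lemma permutes_comp_restrict_id:
  assumes "p permutes A" and "p' permutes B" and "A \<inter> B = {}"
  shows "restrict_id (p \<circ> p') A = p" and "restrict_id (p \<circ> p') B = p'"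
proof -
  have "p' x = x" if "x \<in> A" for x using that assms by (intro permutes_not_in) auto
  then show "restrict_id (p \<circ> p') A = p"
    using assms(1) by (auto simp: fun_eq_iff restrict_id_def permutes_not_in)
  have "p (p' x) = p' x" if "x \<in> B" for x
    using that assms by (intro permutes_not_in) (auto simp: permutes_in_image)
  then show "restrict_id (p \<circ> p') B = p'"
    using assms(2) by (auto simp: fun_eq_iff restrict_id_def permutes_not_in)
qed

lemma permutes_split_restrict_id:
  assumes \<pi>: "\<pi> permutes A \<union> B" and "A \<inter> B = {}" and "\<pi> ` A = A"
  shows "restrict_id \<pi> A permutes A" and "restrict_id \<pi> B permutes B"
    and "\<pi> = restrict_id \<pi> A \<circ> restrict_id \<pi> B"
proof -
  have inj: "inj_on \<pi> (A \<union> B)" by (rule permutes_inj_on[OF \<pi>])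
  have "B = (A \<union> B) - A" using assms(2) by auto
  moreover have "\<pi> ` ((A \<union> B) - A) = \<pi> ` (A \<union> B) - \<pi> ` A"
    by (rule inj_on_image_set_diff[OF inj]) auto
  ultimately have imB: "\<pi> ` B = B"
    using assms(3) permutes_image[OF \<pi>] by simp
  show "restrict_id \<pi> A permutes A" "restrict_id \<pi> B permutes B"
    using inj assms(3) imB by (auto intro!: permutes_restrict_id simp: bij_betw_def inj_on_Un)
  show "\<pi> = restrict_id \<pi> A \<circ> restrict_id \<pi> B"
    using imB assms(2) permutes_not_in[OF \<pi>] by (auto simp: fun_eq_iff restrict_id_def)
qed

lemma image_lessThan_comp_blocks:
  fixes n N :: nat
  assumes "p permutes {..<n}" and "p' permutes {n..<N}"
  shows "(\<sigma> \<circ> p \<circ> p') ` {..<n} = \<sigma> ` {..<n}"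
proof -
  have "p' x = x" if "x < n" for x using that by (intro permutes_not_in[OF assms(2)]) auto
  then have "(\<sigma> \<circ> p \<circ> p') ` {..<n} = (\<sigma> \<circ> p) ` {..<n}" by (intro image_cong) simp_all
  also have "\<dots> = \<sigma> ` p ` {..<n}" by (rule image_comp[symmetric])
  finally show ?thesis by (simp only: permutes_image[OF assms(1)])
qed

lemma shuffle_decomposition_unique:
  assumes "n \<le> N" and \<sigma>: "\<sigma> \<in> shuffles n N" and \<tau>: "\<tau> \<in> shuffles n N"
    and p: "p permutes {..<n}" "p' permutes {n..<N}" and r: "r permutes {..<n}" "r' permutes {n..<N}"
    and eq: "\<sigma> \<circ> p \<circ> p' = \<tau> \<circ> r \<circ> r'"
  shows "\<sigma> = \<tau>" and "p = r" and "p' = r'"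
proof -
  have "\<sigma> ` {..<n} = \<tau> ` {..<n}"
    using image_lessThan_comp_blocks[OF p, of \<sigma>] image_lessThan_comp_blocks[OF r, of \<tau>] eq by simp
  then show "\<sigma> = \<tau>" using \<sigma> \<tau> assms(1) by (intro shuffles_eqI[of \<sigma> n N \<tau>])
  moreover have "inj \<sigma>" using \<sigma> by (auto simp: shuffles_def permutes_inj)
  ultimately have "p \<circ> p' = r \<circ> r'" using eq by (simp add: \<open>\<sigma> = \<tau>\<close>[symmetric] inj_eq fun_eq_iff)
  moreover have disj: "{..<n} \<inter> {n..<N} = {}" by auto
  ultimately show "p = r" "p' = r'"
    using permutes_comp_restrict_id[OF p disj] permutes_comp_restrict_id[OF r disj] by metis+
qed

lemma shuffle_decomposition_exists:
  assumes "n \<le> N" and \<rho>: "\<rho> permutes {..<N}"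
  obtains \<sigma> p p' where "\<sigma> \<in> shuffles n N" and "p permutes {..<n}" and "p' permutes {n..<N}"
    and "\<rho> = \<sigma> \<circ> p \<circ> p'"
proof -
  have "\<rho> ` {..<n} \<subseteq> \<rho> ` {..<N}" using assms(1) by auto
  then have sub: "\<rho> ` {..<n} \<subseteq> {..<N}" by (simp add: permutes_image[OF \<rho>])
  have card: "card (\<rho> ` {..<n}) = n"
    using permutes_inj[OF \<rho>] by (simp add: card_image inj_on_subset)
  obtain \<sigma> where \<sigma>: "\<sigma> \<in> shuffles n N" "\<sigma> ` {..<n} = \<rho> ` {..<n}"
    by (rule shuffle_with_image[OF sub card assms(1)])
  then have \<sigma>N: "\<sigma> permutes {..<N}" by (simp add: shuffles_def)
  define \<pi> where "\<pi> = Hilbert_Choice.inv \<sigma> \<circ> \<rho>"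
  have disj: "{..<n} \<inter> {n..<N} = {}" by auto
  have "{..<N} = {..<n} \<union> {n..<N}" using assms(1) by auto
  then have \<pi>: "\<pi> permutes {..<n} \<union> {n..<N}"
    unfolding \<pi>_def by (metis permutes_compose permutes_inv \<rho> \<sigma>N)
  have "\<pi> ` {..<n} = Hilbert_Choice.inv \<sigma> ` \<rho> ` {..<n}" by (simp add: \<pi>_def image_comp)
  also have "\<dots> = {..<n}"
    unfolding \<sigma>(2)[symmetric] by (rule image_inv_f_f[OF permutes_inj[OF \<sigma>N]])
  finally have blocks: "restrict_id \<pi> {..<n} permutes {..<n}" "restrict_id \<pi> {n..<N} permutes {n..<N}"
    "\<pi> = restrict_id \<pi> {..<n} \<circ> restrict_id \<pi> {n..<N}"
    by (rule permutes_split_restrict_id[OF \<pi> disj])+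
  have "\<rho> = \<sigma> \<circ> \<pi>" by (simp add: \<pi>_def o_assoc permutes_inv_o[OF \<sigma>N])
  then have "\<rho> = \<sigma> \<circ> restrict_id \<pi> {..<n} \<circ> restrict_id \<pi> {n..<N}"
    unfolding o_assoc[symmetric] blocks(3)[symmetric] .
  with \<sigma>(1) blocks(1,2) that show ?thesis by blast
qed

lemma sum_permutes_eq_sum_shuffles:
  fixes g :: "(nat \<Rightarrow> nat) \<Rightarrow> 'a::comm_monoid_add"
  assumes "n \<le> N"
  shows "(\<Sum>\<rho>\<in>{\<rho>. \<rho> permutes {..<N}}. g \<rho>) =
    (\<Sum>\<sigma>\<in>shuffles n N. \<Sum>p\<in>{p. p permutes {..<n}}. \<Sum>p'\<in>{p. p permutes {n..<N}}. g (\<sigma> \<circ> p \<circ> p'))"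
proof -
  let ?D = "shuffles n N \<times> {p. p permutes {..<n}} \<times> {p. p permutes {n..<N}}"
  define \<Phi> :: "(nat \<Rightarrow> nat) \<times> (nat \<Rightarrow> nat) \<times> (nat \<Rightarrow> nat) \<Rightarrow> nat \<Rightarrow> nat"
    where "\<Phi> = (\<lambda>(\<sigma>, p, p'). \<sigma> \<circ> p \<circ> p')"
  have "inj_on \<Phi> ?D"
    using shuffle_decomposition_unique[OF assms] by (auto simp: inj_on_def \<Phi>_def)
  moreover have "\<Phi> ` ?D = {\<rho>. \<rho> permutes {..<N}}"
  proof (intro equalityI subsetI)
    fix \<rho> assume "\<rho> \<in> \<Phi> ` ?D"
    then obtain \<sigma> p p' where "\<sigma> \<in> shuffles n N" "p permutes {..<n}" "p' permutes {n..<N}"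
      and "\<rho> = \<sigma> \<circ> p \<circ> p'" by (auto simp: \<Phi>_def)
    then show "\<rho> \<in> {\<rho>. \<rho> permutes {..<N}}"
      using assms by (auto simp: shuffles_def intro!: permutes_compose elim: permutes_subset)
  next
    fix \<rho> assume "\<rho> \<in> {\<rho>. \<rho> permutes {..<N}}"
    then obtain \<sigma> p p' where "\<sigma> \<in> shuffles n N" "p permutes {..<n}" "p' permutes {n..<N}"
      and "\<rho> = \<sigma> \<circ> p \<circ> p'" using shuffle_decomposition_exists[OF assms] by blast
    then show "\<rho> \<in> \<Phi> ` ?D" by (force simp: \<Phi>_def)
  qed
  ultimately have "(\<Sum>\<rho>\<in>{\<rho>. \<rho> permutes {..<N}}. g \<rho>) = (\<Sum>z\<in>?D. g (\<Phi> z))"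
    by (metis sum.reindex_cong)
  then show ?thesis by (simp add: sum.cartesian_product \<Phi>_def case_prod_unfold)
qed

section \<open>Index tuples and the multilinear bracket\<close>

lemma (in comm_monoid_set) lessThan_double_minus_one:
  fixes n :: nat
  assumes "1 \<le> n"
  shows "F g {..<2*n-1} = F g {..<n} \<^bold>* F (\<lambda>j. g (n - 1 + j)) {1..<n}"
proof -
  have "F g {..<2*n-1} = F g {..<n} \<^bold>* F g {1 + (n - 1)..<n + (n - 1)}"
    using assms by (simp add: lessThan_atLeast0 atLeastLessThan_concat mult_2)
  also have "F g {1 + (n - 1)..<n + (n - 1)} = F (\<lambda>j. g (n - 1 + j)) {1..<n}"
    by (simp only: shift_bounds_nat_ivl add.commute)
  finally show ?thesis .
qed

lemma (in comm_monoid_set) lessThan_split_zero: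
  "1 \<le> (n::nat) \<Longrightarrow> F g {..<n} = g 0 \<^bold>* F g {1..<n}"
  by (simp add: lessThan_atLeast0 atLeast_Suc_lessThan)

text \<open>Index of the outer bracket in a term of the sh-Jacobi identity: the inner bracket of the first
  n arguments contributes the sum of their indices.\<close>

definition outer_index :: "nat \<Rightarrow> (nat \<Rightarrow> int) \<Rightarrow> nat \<Rightarrow> int" where
  "outer_index n v j = (if j = 0 then (\<Sum>k<n. v k) else v (n - 1 + j))"

lemma outer_index_comp_permutes:
  assumes "p permutes {..<n}"
  shows "outer_index n (v \<circ> p) = outer_index n v"
proof
  fix j
  have "p (n - 1 + j) = n - 1 + j" if "j \<noteq> 0"
    using that by (intro permutes_not_in[OF assms]) auto
  then show "outer_index n (v \<circ> p) j = outer_index n v j"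
    using sum.permute[OF assms, of v] by (simp add: outer_index_def)
qed

lemma sum_outer_index:
  assumes "1 \<le> n"
  shows "(\<Sum>j<n. outer_index n v j) = (\<Sum>l<2*n-1. v l)"
proof -
  have "(\<Sum>j<n. outer_index n v j) = outer_index n v 0 + (\<Sum>j\<in>{1..<n}. outer_index n v j)"
    by (rule sum.lessThan_split_zero[OF assms])
  also have "\<dots> = (\<Sum>k<n. v k) + (\<Sum>j\<in>{1..<n}. v (n - 1 + j))"
    by (simp add: outer_index_def)
  also have "\<dots> = (\<Sum>l<2*n-1. v l)"
    by (rule sum.lessThan_double_minus_one[OF assms, symmetric])
  finally show ?thesis .
qed

lemma outer_index_comp_upper_block:
  assumes p: "p permutes {n..<2*n-1}"
  defines "p' \<equiv> map_permutation {n..<2*n-1} (\<lambda>l. l - (n - 1)) p"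
  shows "p' permutes {..<n}" and "sign p' = sign p"
    and "j < n \<Longrightarrow> outer_index n (v \<circ> p) j = outer_index n v (p' j)"
proof -
  have inj: "inj_on (\<lambda>l. l - (n - 1)) {n..<2*n-1}" by (rule inj_on_diff_nat) auto
  have im: "(\<lambda>l. l - (n - 1)) ` {n..<2*n-1} = {1..<n}"
    by (auto simp: image_minus_const_atLeastLessThan_nat)
  have "p' permutes {1..<n}"
    unfolding p'_def im[symmetric] by (rule map_permutation_permutes[OF inj_on_imp_bij_betw[OF inj] p])
  then show "p' permutes {..<n}" by (rule permutes_subset) auto
  show "sign p' = sign p" unfolding p'_def by (rule sign_map_permutation[OF inj p]) simp
  assume "j < n"
  show "outer_index n (v \<circ> p) j = outer_index n v (p' j)"
  proof (cases "j = 0")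
    case True
    have "p' 0 = 0" using \<open>p' permutes {1..<n}\<close> by (simp add: permutes_not_in)
    moreover have "(\<Sum>k<n. v (p k)) = (\<Sum>k<n. v k)"
      using permutes_not_in[OF p] by (intro sum.cong) auto
    ultimately show ?thesis using True by (simp add: outer_index_def)
  next
    case False
    define l where "l = n - 1 + j"
    have l: "l \<in> {n..<2*n-1}" "j = l - (n - 1)" using False \<open>j < n\<close> by (auto simp: l_def)
    then have "p l \<in> {n..<2*n-1}" by (simp only: permutes_in_image[OF p])
    moreover have "p' j = p l - (n - 1)"
      unfolding p'_def l(2) by (rule map_permutation_apply[OF inj l(1)])
    ultimately show ?thesis using False \<open>j < n\<close> by (auto simp: outer_index_def l_def)
  qed
qed

definition index_tuples :: "nat \<Rightarrow> (nat \<Rightarrow> int set) \<Rightarrow> int \<Rightarrow> (nat \<Rightarrow> int) set" where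
  "index_tuples n S m = {i \<in> PiE {..<n} S. (\<Sum>j<n. i j) = m}"

lemma finite_index_tuples: "(\<And>j. j < n \<Longrightarrow> finite (S j)) \<Longrightarrow> finite (index_tuples n S m)"
  unfolding index_tuples_def by (rule finite_subset[OF _ finite_PiE[of "{..<n}" S]]) auto

lemma index_tuples_comp_permutes:
  assumes p: "p permutes {..<n}" and i: "i \<in> index_tuples n S m"
  shows "i \<circ> p \<in> index_tuples n (S \<circ> p) m"
proof -
  have "p j < n" if "j < n" for j using permutes_in_image[OF p] that by simp
  then have "i \<circ> p \<in> PiE {..<n} (S \<circ> p)"
    using i permutes_not_in[OF p] by (auto simp: index_tuples_def PiE_iff extensional_def)
  then show ?thesis using i sum.permute[OF p, of i] by (simp add: index_tuples_def)
qed

lemma sum_index_tuples_comp_permutes: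
  assumes p: "p permutes {..<n}"
  shows "(\<Sum>i\<in>index_tuples n (S \<circ> p) m. g i) = (\<Sum>i\<in>index_tuples n S m. g (i \<circ> p))"
proof (rule sum.reindex_bij_witness[where j = "\<lambda>i. i \<circ> Hilbert_Choice.inv p" and i = "\<lambda>i. i \<circ> p"])
  have p': "Hilbert_Choice.inv p permutes {..<n}" by (rule permutes_inv[OF p])
  have inv: "p \<circ> Hilbert_Choice.inv p = id" "Hilbert_Choice.inv p \<circ> p = id"
    by (rule permutes_inv_o[OF p])+
  fix i :: "nat \<Rightarrow> int"
  show "i \<circ> Hilbert_Choice.inv p \<circ> p = i" "i \<circ> p \<circ> Hilbert_Choice.inv p = i"
    by (simp_all add: o_assoc[symmetric] inv)
  show "i \<in> index_tuples n S m \<Longrightarrow> i \<circ> p \<in> index_tuples n (S \<circ> p) m"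
    by (rule index_tuples_comp_permutes[OF p])
  show "i \<in> index_tuples n (S \<circ> p) m \<Longrightarrow> i \<circ> Hilbert_Choice.inv p \<in> index_tuples n S m"
    using index_tuples_comp_permutes[OF p', of i "S \<circ> p"] by (simp add: o_assoc[symmetric] inv)
  show "g (i \<circ> Hilbert_Choice.inv p \<circ> p) = g i" by (simp add: o_assoc[symmetric] inv)
qed

definition bracket_ext :: "nat \<Rightarrow> ((nat \<Rightarrow> int) \<Rightarrow> complex) \<Rightarrow> (nat \<Rightarrow> int \<Rightarrow> complex) \<Rightarrow> int \<Rightarrow> complex" where
  "bracket_ext n c x m = (\<Sum>i\<in>index_tuples n (\<lambda>j. {k. x j k \<noteq> 0}) m. (\<Prod>j<n. x j (i j)) * c i)"

lemma qbracket_eq_bracket_ext: "qbracket q n = bracket_ext n (qcoeff q n)"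
  by (simp add: fun_eq_iff qbracket_def bracket_ext_def index_tuples_def)

lemma bracket_ext_eq_sum_index_tuples:
  assumes "\<And>j. j < n \<Longrightarrow> finite (S j)" and "\<And>j. j < n \<Longrightarrow> {k. x j k \<noteq> 0} \<subseteq> S j"
  shows "bracket_ext n c x m = (\<Sum>i\<in>index_tuples n S m. (\<Prod>j<n. x j (i j)) * c i)"
  unfolding bracket_ext_def
proof (rule sum.mono_neutral_left)
  show "finite (index_tuples n S m)" by (rule finite_index_tuples[OF assms(1)])
  show "index_tuples n (\<lambda>j. {k. x j k \<noteq> 0}) m \<subseteq> index_tuples n S m"
    using assms(2) by (auto simp: index_tuples_def PiE_iff)
  show "\<forall>i\<in>index_tuples n S m - index_tuples n (\<lambda>j. {k. x j k \<noteq> 0}) m. (\<Prod>j<n. x j (i j)) * c i = 0"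
    by (auto simp: index_tuples_def PiE_iff)
qed

lemma bracket_ext_in_Vspace:
  assumes "\<And>j. j < n \<Longrightarrow> x j \<in> Vspace"
  shows "bracket_ext n c x \<in> Vspace"
proof -
  let ?P = "PiE {..<n} (\<lambda>j. {k. x j k \<noteq> 0})"
  have "finite ?P" using assms by (intro finite_PiE) (auto simp: Vspace_def)
  moreover have "{m. bracket_ext n c x m \<noteq> 0} \<subseteq> (\<lambda>i. \<Sum>j<n. i j) ` ?P"
  proof
    fix m assume "m \<in> {m. bracket_ext n c x m \<noteq> 0}"
    then have "index_tuples n (\<lambda>j. {k. x j k \<noteq> 0}) m \<noteq> {}"
      by (auto simp: bracket_ext_def)
    then obtain i where "i \<in> index_tuples n (\<lambda>j. {k. x j k \<noteq> 0}) m" by blast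
    then show "m \<in> (\<lambda>i. \<Sum>j<n. i j) ` ?P" by (auto simp: index_tuples_def)
  qed
  ultimately show ?thesis by (auto simp: Vspace_def intro: finite_subset)
qed

lemma bracket_ext_linear:
  assumes x: "\<And>k. k < n \<Longrightarrow> x k \<in> Vspace" and j: "j < n" and y: "y \<in> Vspace" and z: "z \<in> Vspace"
  shows "bracket_ext n c (x(j := (\<lambda>m. a * y m + b * z m))) =
    (\<lambda>m. a * bracket_ext n c (x(j := y)) m + b * bracket_ext n c (x(j := z)) m)"
proof
  fix m
  define S where "S k = (if k = j then {k. y k \<noteq> 0} \<union> {k. z k \<noteq> 0} else {m. x k m \<noteq> 0})" for k
  have fin: "finite (S k)" if "k < n" for k using x y z that by (auto simp: S_def Vspace_def)
  have expand: "bracket_ext n c (x(j := w)) m =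
      (\<Sum>i\<in>index_tuples n S m. w (i j) * ((\<Prod>k\<in>{..<n} - {j}. x k (i k)) * c i))"
    if "{k. w k \<noteq> 0} \<subseteq> S j" for w
  proof -
    have "{k. (x(j := w)) l k \<noteq> 0} \<subseteq> S l" if "l < n" for l
      using \<open>{k. w k \<noteq> 0} \<subseteq> S j\<close> by (simp add: S_def)
    moreover have "(\<Prod>k<n. (x(j := w)) k (i k)) = w (i j) * (\<Prod>k\<in>{..<n} - {j}. x k (i k))" for i
      using j by (simp add: prod.remove)
    ultimately show ?thesis by (simp add: bracket_ext_eq_sum_index_tuples[OF fin] mult.assoc)
  qed
  show "bracket_ext n c (x(j := (\<lambda>m. a * y m + b * z m))) m =
      a * bracket_ext n c (x(j := y)) m + b * bracket_ext n c (x(j := z)) m"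
    by (subst (1 2 3) expand)
      (auto simp: S_def sum_distrib_left sum.distrib[symmetric] distrib_right mult.assoc)
qed

definition join_tuple :: "nat \<Rightarrow> (nat \<Rightarrow> int) \<Rightarrow> (nat \<Rightarrow> int) \<Rightarrow> nat \<Rightarrow> int" where
  "join_tuple n i t l = (if l < n then t l else if l < 2*n-1 then i (l - (n - 1)) else undefined)"

lemma restrict_join_tuple: "t \<in> extensional {..<n} \<Longrightarrow> restrict (join_tuple n i t) {..<n} = t"
  by (auto simp: fun_eq_iff join_tuple_def extensional_def)

lemma restrict_outer_index_join_tuple:
  assumes "1 \<le> n" and "i \<in> extensional {..<n}" and "(\<Sum>k<n. t k) = i 0"
  shows "restrict (outer_index n (join_tuple n i t)) {..<n} = i"
  using assms by (auto simp: fun_eq_iff outer_index_def join_tuple_def extensional_def)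

lemma join_tuple_restrict:
  assumes "1 \<le> n" and "v \<in> extensional {..<2*n-1}"
  shows "join_tuple n (restrict (outer_index n v) {..<n}) (restrict v {..<n}) = v"
  using assms by (auto simp: fun_eq_iff join_tuple_def outer_index_def extensional_def)

lemma sum_index_tuples_split:
  fixes G :: "(nat \<Rightarrow> int) \<Rightarrow> (nat \<Rightarrow> int) \<Rightarrow> 'a::comm_monoid_add"
  assumes n: "1 \<le> n" and T: "finite T" and S0: "finite (S 0)"
    and S: "\<And>j. 0 < j \<Longrightarrow> S j = T"
    and sums: "(\<lambda>t. \<Sum>k<n. t k) ` PiE {..<n} (\<lambda>_. T) \<subseteq> S 0"
  shows "(\<Sum>i\<in>index_tuples n S m. \<Sum>t\<in>index_tuples n (\<lambda>_. T) (i 0). G i t) =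
    (\<Sum>v\<in>index_tuples (2*n-1) (\<lambda>_. T) m. G (restrict (outer_index n v) {..<n}) (restrict v {..<n}))"
proof -
  let ?I = "Sigma (index_tuples n S m) (\<lambda>i. index_tuples n (\<lambda>_. T) (i 0))"
  let ?V = "index_tuples (2*n-1) (\<lambda>_. T) m"
  define split where "split v = (restrict (outer_index n v) {..<n}, restrict v {..<n})" for v
  have finS: "finite (S j)" for j using S0 T S by (cases "j = 0") auto
  have split_join: "split (join_tuple n i t) = (i, t)" if "(i, t) \<in> ?I" for i t
    using that n by (simp add: split_def index_tuples_def PiE_iff restrict_join_tuple
        restrict_outer_index_join_tuple)
  have join_in: "join_tuple n i t \<in> ?V" if it: "(i, t) \<in> ?I" for i t
  proof -
    have "join_tuple n i t l \<in> T" if "l < 2*n-1" for l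
    proof (cases "l < n")
      case False
      then have "0 < l - (n - 1)" "l - (n - 1) < n" using that by auto
      then show ?thesis using it S[of "l - (n - 1)"] False that
        by (auto simp: join_tuple_def index_tuples_def PiE_iff)
    qed (use it in \<open>simp add: join_tuple_def index_tuples_def PiE_iff\<close>)
    then have "join_tuple n i t \<in> PiE {..<2*n-1} (\<lambda>_. T)"
      using n by (auto simp: PiE_iff extensional_def join_tuple_def)
    moreover have "outer_index n (join_tuple n i t) j = i j" if "j < n" for j
      using split_join[OF it] that by (metis split_def prod.inject lessThan_iff restrict_apply')
    then have "(\<Sum>j<n. outer_index n (join_tuple n i t) j) = m"
      using it by (simp add: index_tuples_def)
    then have "(\<Sum>l<2*n-1. join_tuple n i t l) = m" by (simp only: sum_outer_index[OF n])
    ultimately show ?thesis by (simp add: index_tuples_def)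
  qed
  have split_in: "split v \<in> ?I" if v: "v \<in> ?V" for v
  proof -
    have "restrict v {..<n} \<in> PiE {..<n} (\<lambda>_. T)" using v n by (auto simp: index_tuples_def PiE_iff)
    then have "(\<Sum>k<n. restrict v {..<n} k) \<in> S 0" using sums by blast
    then have "(\<Sum>k<n. v k) \<in> S 0" by simp
    then have "restrict (outer_index n v) {..<n} \<in> PiE {..<n} S"
      using v S by (auto simp: index_tuples_def PiE_iff outer_index_def)
    moreover have "(\<Sum>j<n. outer_index n v j) = m"
      using v by (simp add: sum_outer_index[OF n] index_tuples_def)
    ultimately show ?thesis
      using v n by (auto simp: split_def index_tuples_def PiE_iff outer_index_def)
  qed
  have "(\<Sum>i\<in>index_tuples n S m. \<Sum>t\<in>index_tuples n (\<lambda>_. T) (i 0). G i t) = (\<Sum>(i, t)\<in>?I. G i t)"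
    by (rule sum.Sigma) (simp_all add: finite_index_tuples finS T)
  also have "\<dots> = (\<Sum>v\<in>?V. case split v of (i, t) \<Rightarrow> G i t)"
  proof (rule sum.reindex_bij_witness[where j = "\<lambda>(i, t). join_tuple n i t" and i = split])
    fix v assume v: "v \<in> ?V"
    then show "(\<lambda>(i, t). join_tuple n i t) (split v) = v"
      using n by (simp add: split_def join_tuple_restrict index_tuples_def PiE_iff)
    show "split v \<in> ?I" by (rule split_in[OF v])
  next
    fix a assume a: "a \<in> ?I"
    obtain i t where at: "a = (i, t)" by (cases a)
    show "split ((\<lambda>(i, t). join_tuple n i t) a) = a" using split_join a by (simp add: at)
    show "(\<lambda>(i, t). join_tuple n i t) a \<in> ?V" using join_in a by (simp add: at)
  qed (auto simp: split_join)
  finally show ?thesis by (simp add: split_def)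
qed

section \<open>Alternating structure constants\<close>

locale alternating_coeff =
  fixes n :: nat and c :: "(nat \<Rightarrow> int) \<Rightarrow> complex"
  assumes coeff_cong: "(\<And>j. j < n \<Longrightarrow> i j = i' j) \<Longrightarrow> c i = c i'"
    and coeff_comp_permutes: "p permutes {..<n} \<Longrightarrow> c (i \<circ> p) = of_int (sign p) * c i"
begin

lemma coeff_restrict: "c (restrict i {..<n}) = c i"
  by (rule coeff_cong) simp

lemma bracket_ext_comp_permutes:
  assumes p: "p permutes {..<n}"
  shows "bracket_ext n c (x \<circ> p) = (\<lambda>m. of_int (sign p) * bracket_ext n c x m)"
proof
  fix m
  let ?S = "\<lambda>j. {k. x j k \<noteq> 0}"
  have "bracket_ext n c (x \<circ> p) m = (\<Sum>i\<in>index_tuples n (?S \<circ> p) m. (\<Prod>j<n. x (p j) (i j)) * c i)"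
    by (simp add: bracket_ext_def comp_def)
  also have "\<dots> = (\<Sum>i\<in>index_tuples n ?S m. (\<Prod>j<n. x (p j) ((i \<circ> p) j)) * c (i \<circ> p))"
    by (rule sum_index_tuples_comp_permutes[OF p])
  also have "\<dots> = (\<Sum>i\<in>index_tuples n ?S m. of_int (sign p) * ((\<Prod>j<n. x j (i j)) * c i))"
    using prod.permute[OF p, of "\<lambda>j. x j (_ j)"] by (simp add: coeff_comp_permutes[OF p] mult_ac)
  finally show "bracket_ext n c (x \<circ> p) m = of_int (sign p) * bracket_ext n c x m"
    by (simp add: bracket_ext_def sum_distrib_left)
qed

lemma jacobi_term_comp_blocks:
  assumes p: "p permutes {..<n}" and p': "p' permutes {n..<2*n-1}"
  shows "c (v \<circ> p \<circ> p') * c (outer_index n (v \<circ> p \<circ> p')) =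
    of_int (sign p * sign p') * (c v * c (outer_index n v))"
proof -
  define u where "u = v \<circ> p"
  obtain p'' where p'': "p'' permutes {..<n}" "sign p'' = sign p'"
    and outer: "\<And>j. j < n \<Longrightarrow> outer_index n (u \<circ> p') j = outer_index n u (p'' j)"
    using outer_index_comp_upper_block[OF p'] by blast
  have "c (u \<circ> p') = c u"
    using permutes_not_in[OF p'] by (intro coeff_cong) simp
  moreover have "c (outer_index n (u \<circ> p')) = of_int (sign p') * c (outer_index n v)"
  proof -
    have "c (outer_index n (u \<circ> p')) = c (outer_index n u \<circ> p'')"
      by (rule coeff_cong) (simp add: outer)
    then show ?thesis
      by (simp add: coeff_comp_permutes[OF p''(1)] p''(2) u_def outer_index_comp_permutes[OF p])
  qed
  moreover have "c u = of_int (sign p) * c v" unfolding u_def by (rule coeff_comp_permutes[OF p])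
  ultimately show ?thesis by (simp add: u_def)
qed

lemma sum_permutes_jacobi_terms:
  "(\<Sum>\<rho>\<in>{\<rho>. \<rho> permutes {..<2*n-1}}. of_int (sign \<rho>) * (c (w \<circ> \<rho>) * c (outer_index n (w \<circ> \<rho>)))) =
    of_nat (fact n * fact (n - 1)) *
    (\<Sum>\<sigma>\<in>shuffles n (2*n-1). of_int (sign \<sigma>) * (c (w \<circ> \<sigma>) * c (outer_index n (w \<circ> \<sigma>))))"
proof -
  let ?Q = "{p. p permutes {..<n}}" and ?Q' = "{p. p permutes {n..<2*n-1}}"
  define J where "J \<sigma> = of_int (sign \<sigma>) * (c (w \<circ> \<sigma>) * c (outer_index n (w \<circ> \<sigma>)))" for \<sigma>
  have J: "J (\<sigma> \<circ> p \<circ> p') = J \<sigma>" if "\<sigma> \<in> shuffles n (2*n-1)" "p \<in> ?Q" "p' \<in> ?Q'" for \<sigma> p p'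
  proof -
    define s where "s = sign p * sign p'"
    have "permutation \<sigma>" "permutation p" "permutation p'"
      using that by (auto simp: shuffles_def permutation_permutes)
    then have sign: "sign (\<sigma> \<circ> p \<circ> p') = sign \<sigma> * s"
      by (simp add: s_def sign_compose permutation_compose)
    have "s * s = (sign p * sign p) * (sign p' * sign p')"
      unfolding s_def by (simp only: ac_simps)
    then have "(of_int s :: complex) * of_int s = 1"
      by (simp flip: of_int_mult)
    moreover have "c (w \<circ> \<sigma> \<circ> p \<circ> p') * c (outer_index n (w \<circ> \<sigma> \<circ> p \<circ> p')) =
        of_int s * (c (w \<circ> \<sigma>) * c (outer_index n (w \<circ> \<sigma>)))"
      unfolding s_def by (rule jacobi_term_comp_blocks) (use that in auto)
    moreover have "of_int (sign \<sigma> * s) * (of_int s * X) = of_int (sign \<sigma>) * ((of_int s * of_int s) * X)"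
      for X :: complex by (simp only: of_int_mult mult.assoc)
    ultimately show ?thesis by (simp add: J_def sign o_assoc)
  qed
  have "(\<Sum>\<rho>\<in>{\<rho>. \<rho> permutes {..<2*n-1}}. J \<rho>) =
      (\<Sum>\<sigma>\<in>shuffles n (2*n-1). \<Sum>p\<in>?Q. \<Sum>p'\<in>?Q'. J (\<sigma> \<circ> p \<circ> p'))"
    by (rule sum_permutes_eq_sum_shuffles) simp
  also have "\<dots> = (\<Sum>\<sigma>\<in>shuffles n (2*n-1). \<Sum>p\<in>?Q. \<Sum>p'\<in>?Q'. J \<sigma>)"
    by (intro sum.cong refl) (simp add: J)
  also have "\<dots> = (\<Sum>\<sigma>\<in>shuffles n (2*n-1). of_nat (card ?Q * card ?Q') * J \<sigma>)"
    by (simp add: mult.assoc)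
  also have "\<dots> = of_nat (card ?Q * card ?Q') * (\<Sum>\<sigma>\<in>shuffles n (2*n-1). J \<sigma>)"
    by (rule sum_distrib_left[symmetric])
  also have "card ?Q * card ?Q' = fact n * fact (n - 1)"
    by (simp add: card_permutations)
  finally show ?thesis by (simp add: J_def)
qed

lemma bracket_ext_nested:
  assumes n: "1 \<le> n" and T: "finite T" and supp: "\<And>l. l < 2*n-1 \<Longrightarrow> {k. y l k \<noteq> 0} \<subseteq> T"
  shows "bracket_ext n c (\<lambda>j. if j = 0 then bracket_ext n c y else y (n - 1 + j)) m =
    (\<Sum>v\<in>index_tuples (2*n-1) (\<lambda>_. T) m. (\<Prod>l<2*n-1. y l (v l)) * (c v * c (outer_index n v)))"
proof -
  define U where "U = (\<lambda>t. \<Sum>k<n. t k) ` PiE {..<n} (\<lambda>_. T)"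
  define S where "S j = (if j = 0 then U else T)" for j :: nat
  define R where "R i = (\<Prod>j\<in>{1..<n}. y (n - 1 + j) (i j))" for i
  have finU: "finite U" using T by (simp add: U_def finite_PiE)
  have inner: "bracket_ext n c y s = (\<Sum>t\<in>index_tuples n (\<lambda>_. T) s. (\<Prod>k<n. y k (t k)) * c t)" for s
    by (rule bracket_ext_eq_sum_index_tuples) (use T supp n in auto)
  have "{s. bracket_ext n c y s \<noteq> 0} \<subseteq> U"
  proof
    fix s assume "s \<in> {s. bracket_ext n c y s \<noteq> 0}"
    then have "index_tuples n (\<lambda>_. T) s \<noteq> {}" by (auto simp: inner)
    then show "s \<in> U" by (auto simp: U_def index_tuples_def)
  qed
  then have "bracket_ext n c (\<lambda>j. if j = 0 then bracket_ext n c y else y (n - 1 + j)) m =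
      (\<Sum>i\<in>index_tuples n S m. (\<Prod>j<n. (if j = 0 then bracket_ext n c y else y (n - 1 + j)) (i j)) * c i)"
    using T finU supp by (intro bracket_ext_eq_sum_index_tuples) (auto simp: S_def)
  also have "\<dots> = (\<Sum>i\<in>index_tuples n S m. \<Sum>t\<in>index_tuples n (\<lambda>_. T) (i 0).
      ((\<Prod>k<n. y k (t k)) * c t) * (R i * c i))"
  proof -
    have "(\<Prod>j<n. (if j = 0 then bracket_ext n c y else y (n - 1 + j)) (i j)) = bracket_ext n c y (i 0) * R i"
      for i unfolding prod.lessThan_split_zero[OF n] R_def by (auto intro!: prod.cong)
    then show ?thesis by (simp add: inner sum_distrib_left sum_distrib_right mult_ac)
  qed
  also have "\<dots> = (\<Sum>v\<in>index_tuples (2*n-1) (\<lambda>_. T) m.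
      ((\<Prod>k<n. y k (v k)) * c v) * (R (outer_index n v) * c (outer_index n v)))"
    by (subst sum_index_tuples_split[OF n T])
      (auto simp: S_def finU[unfolded U_def] U_def coeff_restrict R_def intro!: sum.cong prod.cong)
  also have "\<dots> = (\<Sum>v\<in>index_tuples (2*n-1) (\<lambda>_. T) m. (\<Prod>l<2*n-1. y l (v l)) * (c v * c (outer_index n v)))"
    unfolding prod.lessThan_double_minus_one[OF n] by (simp add: R_def outer_index_def mult_ac)
  finally show ?thesis .
qed

lemma bracket_ext_nested_comp_permutes:
  assumes n: "1 \<le> n" and \<sigma>: "\<sigma> permutes {..<2*n-1}" and T: "finite T"
    and supp: "\<And>l. l < 2*n-1 \<Longrightarrow> {k. x l k \<noteq> 0} \<subseteq> T"
  shows "bracket_ext n c (\<lambda>j. if j = 0 then bracket_ext n c (\<lambda>k. x (\<sigma> k)) else x (\<sigma> (n - 1 + j))) m =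
    (\<Sum>w\<in>index_tuples (2*n-1) (\<lambda>_. T) m.
      (\<Prod>l<2*n-1. x l (w l)) * (c (w \<circ> \<sigma>) * c (outer_index n (w \<circ> \<sigma>))))"
proof -
  let ?W = "index_tuples (2*n-1) (\<lambda>_. T) m"
  have "{k. x (\<sigma> l) k \<noteq> 0} \<subseteq> T" if "l < 2*n-1" for l
    using that permutes_in_image[OF \<sigma>, of l] supp by simp
  then have "bracket_ext n c (\<lambda>j. if j = 0 then bracket_ext n c (\<lambda>k. x (\<sigma> k)) else x (\<sigma> (n - 1 + j))) m =
      (\<Sum>v\<in>?W. (\<Prod>l<2*n-1. x (\<sigma> l) (v l)) * (c v * c (outer_index n v)))"
    by (rule bracket_ext_nested[OF n T])
  also have "\<dots> = (\<Sum>w\<in>?W. (\<Prod>l<2*n-1. x (\<sigma> l) (w (\<sigma> l))) * (c (w \<circ> \<sigma>) * c (outer_index n (w \<circ> \<sigma>))))"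
    using sum_index_tuples_comp_permutes[OF \<sigma>, where S = "\<lambda>_. T"] by (simp add: comp_def)
  also have "\<dots> = (\<Sum>w\<in>?W. (\<Prod>l<2*n-1. x l (w l)) * (c (w \<circ> \<sigma>) * c (outer_index n (w \<circ> \<sigma>))))"
  proof -
    have "(\<Prod>l<2*n-1. x (\<sigma> l) (w (\<sigma> l))) = (\<Prod>l<2*n-1. x l (w l))" for w
      using prod.permute[OF \<sigma>, of "\<lambda>l. x l (w l)"] by (simp add: comp_def)
    then show ?thesis by simp
  qed
  finally show ?thesis .
qed

theorem sh_n_Lie_bracket_ext:
  assumes n: "1 \<le> n"
    and jacobi: "\<And>w. (\<Sum>\<sigma>\<in>shuffles n (2*n-1).
      of_int (sign \<sigma>) * (c (w \<circ> \<sigma>) * c (outer_index n (w \<circ> \<sigma>)))) = 0"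
  shows "sh_n_Lie Vspace n (bracket_ext n c)"
  unfolding sh_n_Lie_def shuffles_def[symmetric]
proof (intro conjI allI impI)
  show "bracket_ext n c x \<in> Vspace" if "\<forall>j<n. x j \<in> Vspace" for x
    using that by (simp add: bracket_ext_in_Vspace)
  show "bracket_ext n c (x(j := (\<lambda>m. a * y m + b * z m))) =
      (\<lambda>m. a * bracket_ext n c (x(j := y)) m + b * bracket_ext n c (x(j := z)) m)"
    if "(\<forall>k<n. x k \<in> Vspace) \<and> j < n \<and> y \<in> Vspace \<and> z \<in> Vspace" for x j y z a b
    using that by (simp add: bracket_ext_linear)
  show "bracket_ext n c (x \<circ> p) = (\<lambda>m. of_int (sign p) * bracket_ext n c x m)"
    if "(\<forall>k<n. x k \<in> Vspace) \<and> p permutes {..<n}" for x p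
    using that by (simp add: bracket_ext_comp_permutes)
  fix x :: "nat \<Rightarrow> int \<Rightarrow> complex"
  assume x: "\<forall>k<2*n-1. x k \<in> Vspace"
  define T where "T = (\<Union>l<2*n-1. {k. x l k \<noteq> 0})"
  have T: "finite T" using x by (auto simp: T_def Vspace_def)
  have supp: "{k. x l k \<noteq> 0} \<subseteq> T" if "l < 2*n-1" for l using that by (auto simp: T_def)
  show "(\<lambda>m. \<Sum>\<sigma>\<in>shuffles n (2*n-1). of_int (sign \<sigma>) *
      bracket_ext n c (\<lambda>j. if j = 0 then bracket_ext n c (\<lambda>k. x (\<sigma> k)) else x (\<sigma> (n - 1 + j))) m) = (\<lambda>m. 0)"
  proof
    fix m
    let ?W = "index_tuples (2*n-1) (\<lambda>_. T) m"
    have "(\<Sum>\<sigma>\<in>shuffles n (2*n-1). of_int (sign \<sigma>) *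
        bracket_ext n c (\<lambda>j. if j = 0 then bracket_ext n c (\<lambda>k. x (\<sigma> k)) else x (\<sigma> (n - 1 + j))) m) =
        (\<Sum>\<sigma>\<in>shuffles n (2*n-1). \<Sum>w\<in>?W. of_int (sign \<sigma>) *
          ((\<Prod>l<2*n-1. x l (w l)) * (c (w \<circ> \<sigma>) * c (outer_index n (w \<circ> \<sigma>)))))"
    proof (rule sum.cong[OF refl])
      fix \<sigma> assume "\<sigma> \<in> shuffles n (2*n-1)"
      then have "\<sigma> permutes {..<2*n-1}" by (simp add: shuffles_def)
      from bracket_ext_nested_comp_permutes[where x = x and m = m, OF n this T supp]
      show "of_int (sign \<sigma>) *
          bracket_ext n c (\<lambda>j. if j = 0 then bracket_ext n c (\<lambda>k. x (\<sigma> k)) else x (\<sigma> (n - 1 + j))) m =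
        (\<Sum>w\<in>?W. of_int (sign \<sigma>) *
          ((\<Prod>l<2*n-1. x l (w l)) * (c (w \<circ> \<sigma>) * c (outer_index n (w \<circ> \<sigma>)))))"
        by (simp add: sum_distrib_left)
    qed
    also have "\<dots> = (\<Sum>w\<in>?W. (\<Prod>l<2*n-1. x l (w l)) * (\<Sum>\<sigma>\<in>shuffles n (2*n-1).
        of_int (sign \<sigma>) * (c (w \<circ> \<sigma>) * c (outer_index n (w \<circ> \<sigma>)))))"
      by (subst sum.swap) (simp add: sum_distrib_left mult.left_commute)
    also have "\<dots> = 0" by (simp only: jacobi mult_zero_right sum.neutral_const)
    finally show "(\<Sum>\<sigma>\<in>shuffles n (2*n-1). of_int (sign \<sigma>) *
        bracket_ext n c (\<lambda>j. if j = 0 then bracket_ext n c (\<lambda>k. x (\<sigma> k)) else x (\<sigma> (n - 1 + j))) m) = 0" .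
  qed
qed

end

section \<open>The q-deformed structure constants\<close>

definition row_exp :: "nat \<Rightarrow> nat \<Rightarrow> int" where
  "row_exp n r = int r - int ((n - 1) div 2)"

definition qdiag :: "complex \<Rightarrow> (nat \<Rightarrow> int) \<Rightarrow> nat \<Rightarrow> (nat \<Rightarrow> int) \<Rightarrow> complex" where
  "qdiag q e n u = (\<Prod>r<n. q powi (2 * e r * u r))"

definition qdet :: "complex \<Rightarrow> (nat \<Rightarrow> int) \<Rightarrow> nat \<Rightarrow> (nat \<Rightarrow> int) \<Rightarrow> complex" where
  "qdet q e n i = (\<Sum>p\<in>{p. p permutes {..<n}}. of_int (sign p) * qdiag q e n (i \<circ> p))"

lemma qcoeff_eq_qdet: "qcoeff q n i = signn n / (q - inverse q) ^ (n - 1) * qdet q (row_exp n) n i"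
proof -
  have "det (mat n n (\<lambda>(r, j). q powi (2 * (int r - int ((n - 1) div 2)) * i j))) = qdet q (row_exp n) n i"
    unfolding det_def'[OF mat_carrier] qdet_def qdiag_def atLeast0LessThan
  proof (rule sum.cong)
    fix p assume "p \<in> {p. p permutes {..<n}}"
    then have "p r < n" if "r < n" for r using that permutes_in_image by fastforce
    then show "signof p * (\<Prod>r<n. mat n n (\<lambda>(r, j). q powi (2 * (int r - int ((n - 1) div 2)) * i j)) $$ (r, p r))
        = of_int (sign p) * (\<Prod>r<n. q powi (2 * row_exp n r * (i \<circ> p) r))"
      by (simp add: row_exp_def)
  qed simp
  then show ?thesis by (simp add: qcoeff_def)
qed

lemma qdet_cong: "(\<And>j. j < n \<Longrightarrow> i j = i' j) \<Longrightarrow> qdet q e n i = qdet q e n i'"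
proof -
  assume eq: "\<And>j. j < n \<Longrightarrow> i j = i' j"
  have "qdiag q e n (i \<circ> p) = qdiag q e n (i' \<circ> p)" if "p permutes {..<n}" for p
    unfolding qdiag_def using eq permutes_in_image[OF that] by (intro prod.cong) auto
  then show ?thesis by (simp add: qdet_def)
qed

lemma qdet_comp_permutes:
  assumes p0: "p0 permutes {..<n}"
  shows "qdet q e n (i \<circ> p0) = of_int (sign p0) * qdet q e n i"
proof -
  have "qdet q e n i = (\<Sum>p\<in>{p. p permutes {..<n}}. of_int (sign (p0 \<circ> p)) * qdiag q e n (i \<circ> (p0 \<circ> p)))"
    unfolding qdet_def by (rule setum_permutations_compose_left[OF p0])
  also have "\<dots> = of_int (sign p0) * qdet q e n (i \<circ> p0)"
    unfolding qdet_def sum_distrib_left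
    using p0 by (intro sum.cong refl)
      (simp add: sign_compose permutes_imp_permutation[OF finite_lessThan] o_assoc)
  finally have "of_int (sign p0) * qdet q e n i = of_int (sign p0 * sign p0) * qdet q e n (i \<circ> p0)"
    by (simp only: of_int_mult mult.assoc)
  then show ?thesis by simp
qed

lemma alternating_coeff_qcoeff: "alternating_coeff n (qcoeff q n)"
proof
  show "qcoeff q n i = qcoeff q n i'" if "\<And>j. j < n \<Longrightarrow> i j = i' j" for i i'
    unfolding qcoeff_eq_qdet using qdet_cong[OF that] by simp
  show "qcoeff q n (i \<circ> p) = of_int (sign p) * qcoeff q n i" if "p permutes {..<n}" for i p
    unfolding qcoeff_eq_qdet qdet_comp_permutes[OF that] by (simp only: mult_ac)
qed

lemma sum_permutes_sign_prod_identical_rows: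
  fixes M :: "nat \<Rightarrow> nat \<Rightarrow> 'a::{idom, ring_char_0}"
  assumes "a < N" and "b < N" and "a \<noteq> b" and "M a = M b"
  shows "(\<Sum>\<rho>\<in>{\<rho>. \<rho> permutes {..<N}}. of_int (sign \<rho>) * (\<Prod>l<N. M l (\<rho> l))) = 0"
proof -
  let ?P = "{\<rho>. \<rho> permutes {..<N}}"
  define \<tau> where "\<tau> = Transposition.transpose a b"
  define f where "f \<rho> = of_int (sign \<rho>) * (\<Prod>l<N. M l (\<rho> l))" for \<rho>
  have \<tau>: "\<tau> permutes {..<N}" unfolding \<tau>_def using assms by (intro permutes_swap_id) auto
  have rows: "M (\<tau> l) = M l" for l using assms(4) by (simp add: \<tau>_def transpose_def)
  have "f (\<rho> \<circ> \<tau>) = - f \<rho>" if \<rho>: "\<rho> permutes {..<N}" for \<rho>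
  proof -
    have "sign (\<rho> \<circ> \<tau>) = - sign \<rho>"
      using assms(3) permutes_imp_permutation[OF finite_lessThan \<rho>]
      by (simp add: \<tau>_def sign_compose permutation_swap_id sign_swap_id)
    moreover have "(\<Prod>l<N. M l (\<rho> l)) = (\<Prod>l<N. M (\<tau> l) (\<rho> (\<tau> l)))"
      using prod.permute[OF \<tau>, of "\<lambda>l. M l (\<rho> l)"] by (simp only: comp_def)
    ultimately show ?thesis by (simp only: f_def rows o_apply of_int_minus mult_minus_left)
  qed
  then have "sum (\<lambda>\<rho>. f (\<rho> \<circ> \<tau>)) ?P = - sum f ?P"
    by (simp add: sum_negf)
  moreover have "sum (\<lambda>\<rho>. f (\<rho> \<circ> \<tau>)) ?P = sum f ?P"
    by (rule sum_permutations_compose_right[OF \<tau>, symmetric])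
  ultimately have "(1 + 1) * sum f ?P = 0"
    by (simp only: distrib_right mult_1_left eq_neg_iff_add_eq_0)
  moreover have "(1 + 1 :: 'a) \<noteq> 0" by (simp only: one_add_one zero_neq_numeral[symmetric] not_False_eq_True)
  ultimately show ?thesis unfolding f_def by (simp only: mult_eq_0_iff simp_thms)
qed

lemma power_int_sum:
  fixes x :: "'a::field"
  assumes "x \<noteq> 0"
  shows "x powi (\<Sum>k\<in>A. g k) = (\<Prod>k\<in>A. x powi g k)"
  using assms by (induction A rule: infinite_finite_induct) (simp_all add: power_int_add)

text \<open>Row r0 = p^-1 0 of the outer determinant sees the inner index \<open>\<Sum>k<n. u k\<close>, so its
  exponent is added to each of the first n rows; the product becomes one monomial with exponent
  vector f.\<close>

lemma qdiag_outer_index_comp_permutes: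
  fixes e :: "nat \<Rightarrow> int"
  assumes q: "q \<noteq> 0" and n: "1 \<le> n" and p: "p permutes {..<n}" and r0: "r0 < n" "p r0 = 0"
  defines "f \<equiv> \<lambda>l. if l < n then e l + e r0 else e (Hilbert_Choice.inv p (l - (n - 1)))"
  shows "qdiag q e n u * qdiag q e n (outer_index n u \<circ> p) = (\<Prod>l<2*n-1. q powi (2 * f l * u l))"
proof -
  let ?ip = "Hilbert_Choice.inv p"
  have ip: "?ip permutes {..<n}" by (rule permutes_inv[OF p])
  have ip0: "?ip 0 = r0" using r0(2) permutes_inverses(2)[OF p] by metis
  have "qdiag q e n (outer_index n u \<circ> p) = (\<Prod>j<n. q powi (2 * e (?ip j) * outer_index n u j))"
    unfolding qdiag_def using prod.permute[OF ip, of "\<lambda>r. q powi (2 * e r * outer_index n u (p r))"]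
    by (simp add: permutes_inverses(1)[OF p])
  also have "\<dots> = (\<Prod>k<n. q powi (2 * e r0 * u k)) * (\<Prod>j\<in>{1..<n}. q powi (2 * e (?ip j) * u (n - 1 + j)))"
    by (simp add: prod.lessThan_split_zero[OF n] ip0 outer_index_def sum_distrib_left power_int_sum[OF q])
  finally have "qdiag q e n u * qdiag q e n (outer_index n u \<circ> p) =
      (\<Prod>k<n. q powi (2 * (e k + e r0) * u k)) * (\<Prod>j\<in>{1..<n}. q powi (2 * e (?ip j) * u (n - 1 + j)))"
    by (simp add: qdiag_def distrib_left distrib_right power_int_add[OF disjI1[OF q]] prod.distrib mult_ac)
  also have "\<dots> = (\<Prod>l<2*n-1. q powi (2 * f l * u l))"
  proof -
    have "(\<Prod>k<n. q powi (2 * (e k + e r0) * u k)) = (\<Prod>l<n. q powi (2 * f l * u l))"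
      by (intro prod.cong) (simp_all add: f_def)
    moreover have "(\<Prod>j\<in>{1..<n}. q powi (2 * e (?ip j) * u (n - 1 + j))) =
        (\<Prod>j\<in>{1..<n}. q powi (2 * f (n - 1 + j) * u (n - 1 + j)))"
      by (intro prod.cong) (auto simp: f_def)
    ultimately show ?thesis by (simp only: prod.lessThan_double_minus_one[OF n])
  qed
  finally show ?thesis .
qed

text \<open>Rows a and n - 1 + p b of that monomial carry equal exponents, so the alternating sum is a
  determinant with two equal rows.\<close>

lemma sum_permutes_qdiag_outer_index:
  fixes e :: "nat \<Rightarrow> int"
  assumes q: "q \<noteq> 0" and n: "1 \<le> n" and p: "p permutes {..<n}"
    and shift: "\<And>r. r < n \<Longrightarrow> \<exists>a<n. \<exists>b<n. b \<noteq> r \<and> e a + e r = e b"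
  shows "(\<Sum>\<rho>\<in>{\<rho>. \<rho> permutes {..<2*n-1}}.
      of_int (sign \<rho>) * (qdiag q e n (w \<circ> \<rho>) * qdiag q e n (outer_index n (w \<circ> \<rho>) \<circ> p))) = 0"
proof -
  define r0 where "r0 = Hilbert_Choice.inv p 0"
  have r0: "r0 < n" "p r0 = 0"
    using n permutes_in_image[OF permutes_inv[OF p], of 0] permutes_inverses(1)[OF p]
    by (auto simp: r0_def)
  obtain a b where ab: "a < n" "b < n" "b \<noteq> r0" "e a + e r0 = e b"
    using shift[OF r0(1)] by blast
  define f where "f l = (if l < n then e l + e r0 else e (Hilbert_Choice.inv p (l - (n - 1))))" for l
  define t where "t = n - 1 + p b"
  have "p b \<noteq> 0" using ab(3) r0(2) permutes_inj[OF p] by (metis injD)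
  moreover have "p b < n" using ab(2) permutes_in_image[OF p] by simp
  ultimately have t: "n \<le> t" "t < 2*n-1" by (auto simp: t_def)
  have "f a = f t"
    using ab t permutes_inverses(2)[OF p] by (simp add: f_def t_def)
  moreover have "a < 2*n-1" "a \<noteq> t" using ab(1) t by auto
  ultimately have "(\<Sum>\<rho>\<in>{\<rho>. \<rho> permutes {..<2*n-1}}. of_int (sign \<rho>) * (\<Prod>l<2*n-1. q powi (2 * f l * w (\<rho> l)))) = 0"
    using sum_permutes_sign_prod_identical_rows[where M = "\<lambda>l j. q powi (2 * f l * w j)"] t(2) by simp
  then show ?thesis
    by (simp add: qdiag_outer_index_comp_permutes[OF q n p r0] f_def)
qed

lemma qdet_jacobi_sum_eq_0:
  fixes e :: "nat \<Rightarrow> int"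
  assumes q: "q \<noteq> 0" and n: "1 \<le> n"
    and shift: "\<And>r. r < n \<Longrightarrow> \<exists>a<n. \<exists>b<n. b \<noteq> r \<and> e a + e r = e b"
  shows "(\<Sum>\<rho>\<in>{\<rho>. \<rho> permutes {..<2*n-1}}.
      of_int (sign \<rho>) * (qdet q e n (w \<circ> \<rho>) * qdet q e n (outer_index n (w \<circ> \<rho>)))) = 0"
proof -
  let ?P = "{\<rho>. \<rho> permutes {..<2*n-1}}" and ?Q = "{p. p permutes {..<n}}"
  define F where "F \<rho> = of_int (sign \<rho>) * (qdiag q e n (w \<circ> \<rho>) * qdet q e n (outer_index n (w \<circ> \<rho>)))" for \<rho>
  have "sum F ?P = (\<Sum>p\<in>?Q. of_int (sign p) * (\<Sum>\<rho>\<in>?P.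
      of_int (sign \<rho>) * (qdiag q e n (w \<circ> \<rho>) * qdiag q e n (outer_index n (w \<circ> \<rho>) \<circ> p))))"
    unfolding F_def qdet_def sum_distrib_left by (subst sum.swap) (simp add: mult_ac)
  also have "\<dots> = 0"
    using sum_permutes_qdiag_outer_index[OF q n _ shift] by (intro sum.neutral) simp
  finally have F0: "sum F ?P = 0" .
  have expand: "of_int (sign \<rho>) * (qdet q e n (w \<circ> \<rho>) * qdet q e n (outer_index n (w \<circ> \<rho>))) =
      (\<Sum>p\<in>?Q. F (\<rho> \<circ> p))" if "\<rho> \<in> ?P" for \<rho>
  proof -
    have "F (\<rho> \<circ> p) = of_int (sign \<rho>) * (of_int (sign p) * qdiag q e n (w \<circ> \<rho> \<circ> p)) *
        qdet q e n (outer_index n (w \<circ> \<rho>))" if "p \<in> ?Q" for p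
      using that \<open>\<rho> \<in> ?P\<close>
      by (simp add: F_def sign_compose permutes_imp_permutation[OF finite_lessThan] o_assoc
          outer_index_comp_permutes mult_ac)
    then have "(\<Sum>p\<in>?Q. F (\<rho> \<circ> p)) = of_int (sign \<rho>) *
        (\<Sum>p\<in>?Q. of_int (sign p) * qdiag q e n (w \<circ> \<rho> \<circ> p)) * qdet q e n (outer_index n (w \<circ> \<rho>))"
      by (simp add: sum_distrib_left sum_distrib_right)
    then show ?thesis by (simp add: qdet_def[of q e n "w \<circ> \<rho>"] mult.assoc)
  qed
  have "(\<Sum>\<rho>\<in>?P. of_int (sign \<rho>) * (qdet q e n (w \<circ> \<rho>) * qdet q e n (outer_index n (w \<circ> \<rho>))))
      = (\<Sum>\<rho>\<in>?P. \<Sum>p\<in>?Q. F (\<rho> \<circ> p))"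
    by (rule sum.cong[OF refl expand])
  also have "\<dots> = (\<Sum>p\<in>?Q. \<Sum>\<rho>\<in>?P. F (\<rho> \<circ> p))"
    by (rule sum.swap)
  also have "\<dots> = (\<Sum>p\<in>?Q. sum F ?P)"
    by (intro sum.cong refl sum_permutations_compose_right[symmetric]) (auto intro: permutes_subset)
  finally show ?thesis using F0 by simp
qed

text \<open>This is where n \<ge> 3 is used.\<close>

lemma row_exp_shift:
  assumes "3 \<le> n" and "r < n"
  shows "\<exists>a<n. \<exists>b<n. b \<noteq> r \<and> row_exp n a + row_exp n r = row_exp n b"
proof -
  define k where "k = (n - 1) div 2"
  have k: "1 \<le> k" "k + 2 \<le> n" using assms(1) by (auto simp: k_def)
  have exp: "row_exp n j = int j - int k" for j by (simp add: row_exp_def k_def)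
  show ?thesis
  proof (cases "r \<le> k")
    case True
    then have "n - 1 < n" "n - 1 + r - k < n" "n - 1 + r - k \<noteq> r"
      "row_exp n (n - 1) + row_exp n r = row_exp n (n - 1 + r - k)"
      using k assms by (auto simp: exp)
    then show ?thesis by blast
  next
    case False
    then have "0 < n" "r - k < n" "r - k \<noteq> r" "row_exp n 0 + row_exp n r = row_exp n (r - k)"
      using k assms by (auto simp: exp)
    then show ?thesis by blast
  qed
qed

theorem proposition4:
  fixes q :: complex and n :: nat
  assumes "q \<noteq> 0" and "q \<noteq> 1" and "q \<noteq> -1" and "n \<ge> 3"
  shows "sh_n_Lie Vspace n (qbracket q n)"
proof -
  have n: "1 \<le> n" using \<open>n \<ge> 3\<close> by simp
  interpret alternating_coeff n "qcoeff q n" by (rule alternating_coeff_qcoeff)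
  have "(\<Sum>\<sigma>\<in>shuffles n (2*n-1). of_int (sign \<sigma>) * (qcoeff q n (w \<circ> \<sigma>) * qcoeff q n (outer_index n (w \<circ> \<sigma>)))) = 0"
    for w
  proof -
    obtain K where K: "\<And>i. qcoeff q n i = K * qdet q (row_exp n) n i"
      using qcoeff_eq_qdet by blast
    have "(\<Sum>\<rho>\<in>{\<rho>. \<rho> permutes {..<2*n-1}}.
        of_int (sign \<rho>) * (qcoeff q n (w \<circ> \<rho>) * qcoeff q n (outer_index n (w \<circ> \<rho>)))) = 0"
      using qdet_jacobi_sum_eq_0[OF \<open>q \<noteq> 0\<close> n row_exp_shift[OF \<open>n \<ge> 3\<close>], of w]
      by (simp add: K mult_ac flip: sum_distrib_left)
    then have "of_nat (fact n * fact (n - 1)) * (\<Sum>\<sigma>\<in>shuffles n (2*n-1).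
        of_int (sign \<sigma>) * (qcoeff q n (w \<circ> \<sigma>) * qcoeff q n (outer_index n (w \<circ> \<sigma>)))) = 0"
      unfolding sum_permutes_jacobi_terms[symmetric] .
    then show ?thesis by simp
  qed
  then show ?thesis unfolding qbracket_eq_bracket_ext by (rule sh_n_Lie_bracket_ext[OF n])
qed

end
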